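(* Let $k\ge1$ and let $g_1,\dots,g_n$ be the columns of $G_k^\beta$. If $g_i=\lambda g_j$ for some $i,j\in\{1,\dots,n\}$ and $\lambda\in R$, then $\lambda=1$ and $i=j$.
   Context: Let $R$ be a finite commutative chain ring with maximal ideal $\langle\gamma\rangle$, nilpotency index $s$ and residue field $R/\langle\gamma\rangle\cong\mathbb{F}_q$. Fix coset representatives $T=\{e_0,\dots,e_{q-1}\}$ with $e_0=0,e_1=1$, ordered $e_0<\dots<e_{q-1}$; each $r\in R$ is uniquely $\sum_{i=0}^{s-1}r_i\gamma^i$, $r_i\in T$; order $R$ by $x>y$ iff $x_i>y_i$ in $T$ for the largest $i$ with $x_i\neq y_i$; list $R=\{\rho_0,\dots,\rho_{q^s-1}\}$ increasingly. $\mathbf{a}^{(m)}$ is the constant vector of length $m$. Define $G_1^\alpha=(\rho_0\ \cdots\ \rho_{q^s-1})$ and, for $k>1$, $G_k^\alpha$ as the matrix of $q^s$ column blocks, the $j$-th having first row $\boldsymbol{\rho_j}^{(q^{s(k-1)})}$ and $G_{k-1}^\alpha$ below. List $\langle\gamma\rangle$ increasingly as $a_0\gamma<\dots<a_{q^{s-1}-1}\gamma$ ($a_0\gamma=0$). Define $G_1^\beta=(1)$ and, for $k>1$, $G_k^\beta$ as the matrix with column blocks: first a block with first row $\mathbf{1}^{(q^{s(k-1)})}$ and $G_{k-1}^\alpha$ below; then for each $j=0,\dots,q^{s-1}-1$ a block with first row the constant vector with entry $a_j\gamma$ and $G_{k-1}^\beta$ below. *)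

theory Defs
  imports Main
begin

definition is_ideal :: "'a::comm_ring_1 set \<Rightarrow> bool" where
  "is_ideal I \<longleftrightarrow> 0 \<in> I \<and> (\<forall>x\<in>I. \<forall>y\<in>I. x + y \<in> I) \<and> (\<forall>r. \<forall>x\<in>I. r * x \<in> I)"

definition pideal :: "'a::comm_ring_1 \<Rightarrow> 'a set" where
  "pideal g = {g * r | r. True}"

text \<open>Standing setup: the finite ring 'a is a commutative chain ring (ideals totally
 ordered by inclusion) with maximal ideal generated by gam, nilpotency index s,
 residue field of size q, and the list e = [e_0,...,e_(q-1)] of coset
 representatives of the maximal ideal with e_0 = 0, e_1 = 1, ordered by list position.\<close>
definition chain_ring_data :: "'a::{comm_ring_1,finite} \<Rightarrow> nat \<Rightarrow> nat \<Rightarrow> 'a list \<Rightarrow> bool" where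
  "chain_ring_data gam s q e \<longleftrightarrow>
     (0::'a) \<noteq> 1 \<and>
     (\<forall>I J :: 'a set. is_ideal I \<longrightarrow> is_ideal J \<longrightarrow> I \<subseteq> J \<or> J \<subseteq> I) \<and>
     pideal gam \<noteq> UNIV \<and>
     (\<forall>J. is_ideal J \<and> pideal gam \<subseteq> J \<longrightarrow> J = pideal gam \<or> J = UNIV) \<and>
     gam ^ s = 0 \<and> (\<forall>t<s. gam ^ t \<noteq> 0) \<and>
     q = card ((\<lambda>x. {x + y | y. y \<in> pideal gam}) ` (UNIV :: 'a set)) \<and>
     length e = q \<and> e ! 0 = 0 \<and> e ! 1 = 1 \<and>
     (\<forall>x. \<exists>!i. i < q \<and> x - e ! i \<in> pideal gam)"

text \<open>The digits (indices into e) of the gamma-adic expansion r = sum r_i gam^i, r_i in T.\<close>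
definition digits :: "'a::comm_ring_1 \<Rightarrow> nat \<Rightarrow> nat \<Rightarrow> 'a list \<Rightarrow> 'a \<Rightarrow> nat list" where
  "digits gam s q e r = (THE ds. length ds = s \<and> (\<forall>i<s. ds ! i < q) \<and>
       r = (\<Sum>i<s. e ! (ds ! i) * gam ^ i))"

definition cr_less :: "'a::comm_ring_1 \<Rightarrow> nat \<Rightarrow> nat \<Rightarrow> 'a list \<Rightarrow> 'a \<Rightarrow> 'a \<Rightarrow> bool" where
  "cr_less gam s q e x y \<longleftrightarrow>
     (\<exists>i<s. digits gam s q e x ! i < digits gam s q e y ! i \<and>
        (\<forall>l. i < l \<and> l < s \<longrightarrow> digits gam s q e x ! l = digits gam s q e y ! l))"

text \<open>rho j: the j-th element (0-indexed) of R listed increasingly.\<close>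
definition rho :: "'a::comm_ring_1 \<Rightarrow> nat \<Rightarrow> nat \<Rightarrow> 'a list \<Rightarrow> nat \<Rightarrow> 'a" where
  "rho gam s q e j = (THE r. card {x. cr_less gam s q e x r} = j)"

text \<open>agam j = a_j gamma: the j-th element (0-indexed) of the ideal (gamma) listed increasingly.\<close>
definition agam :: "'a::comm_ring_1 \<Rightarrow> nat \<Rightarrow> nat \<Rightarrow> 'a list \<Rightarrow> nat \<Rightarrow> 'a" where
  "agam gam s q e j = (THE r. r \<in> pideal gam \<and>
       card {x \<in> pideal gam. cr_less gam s q e x r} = j)"

text \<open>Column c (0-indexed) of G_k^alpha, as a list of length k (top entry first).
  G_k^alpha has q^(s k) columns; block j of G_(k+1)^alpha has q^(s k) columns.\<close>
fun col_alpha :: "'a::comm_ring_1 \<Rightarrow> nat \<Rightarrow> nat \<Rightarrow> 'a list \<Rightarrow> nat \<Rightarrow> nat \<Rightarrow> 'a list" where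
  "col_alpha gam s q e 0 c = []"
| "col_alpha gam s q e (Suc k) c =
     rho gam s q e (c div q ^ (s * k)) # col_alpha gam s q e k (c mod q ^ (s * k))"

text \<open>Number of columns of G_k^beta (k \<ge> 1).\<close>
fun n_beta :: "nat \<Rightarrow> nat \<Rightarrow> nat \<Rightarrow> nat" where
  "n_beta q s 0 = 0"
| "n_beta q s (Suc 0) = 1"
| "n_beta q s (Suc (Suc k)) = q ^ (s * Suc k) + q ^ (s - 1) * n_beta q s (Suc k)"

text \<open>Column c (0-indexed) of G_k^beta, as a list of length k.\<close>
fun col_beta :: "'a::comm_ring_1 \<Rightarrow> nat \<Rightarrow> nat \<Rightarrow> 'a list \<Rightarrow> nat \<Rightarrow> nat \<Rightarrow> 'a list" where
  "col_beta gam s q e 0 c = []"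
| "col_beta gam s q e (Suc 0) c = [1]"
| "col_beta gam s q e (Suc (Suc k)) c =
     (if c < q ^ (s * Suc k) then 1 # col_alpha gam s q e (Suc k) c
      else (let c' = c - q ^ (s * Suc k) in
            agam gam s q e (c' div n_beta q s (Suc k)) # col_beta gam s q e (Suc k) (c' mod n_beta q s (Suc k))))"

end

theory Submission
  imports Defs
begin

(* Every column of G_k^beta has the shape (entries of <gamma>, 1, anything).  If g_i = lambda g_j
   and the leading ones of g_i and g_j sat at different positions, then 1 = lambda x with lambda
   or x in <gamma>, which is impossible; so they coincide and lambda = 1.  Then g_i = g_j, and
   distinct columns differ because rho and a_j gamma enumerate R and <gamma> without
   repetition: gamma-adic expansions with digits in T are unique, so the order on R is a strict
   total order (colexicographic on digit strings) and the ranks are well defined. *)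

lemma ex1_of_rank:
  fixes S :: "'a set" and less :: "'a \<Rightarrow> 'a \<Rightarrow> bool"
  assumes "finite S"
    and irrefl: "\<And>x. x \<in> S \<Longrightarrow> \<not> less x x"
    and trans: "\<And>x y z. x \<in> S \<Longrightarrow> y \<in> S \<Longrightarrow> z \<in> S \<Longrightarrow> less x y \<Longrightarrow> less y z \<Longrightarrow> less x z"
    and total: "\<And>x y. x \<in> S \<Longrightarrow> y \<in> S \<Longrightarrow> x \<noteq> y \<Longrightarrow> less x y \<or> less y x"
    and "j < card S"
  shows "\<exists>!r. r \<in> S \<and> card {x\<in>S. less x r} = j"
proof -
  define rank where "rank r = card {x\<in>S. less x r}" for r
  have rank_mono: "rank r < rank r'" if "less r r'" "r \<in> S" "r' \<in> S" for r r'
  proof -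
    have "{x\<in>S. less x r} \<subset> {x\<in>S. less x r'}"
      using that irrefl trans by blast
    then show ?thesis
      unfolding rank_def using \<open>finite S\<close> by (intro psubset_card_mono) auto
  qed
  have "inj_on rank S"
    by (rule inj_onI) (metis rank_mono total less_irrefl)
  moreover have "rank ` S \<subseteq> {..<card S}"
  proof
    fix n assume "n \<in> rank ` S"
    then obtain r where "r \<in> S" "n = rank r" by auto
    then have "{x\<in>S. less x r} \<subset> S" using irrefl by auto
    then show "n \<in> {..<card S}"
      unfolding \<open>n = rank r\<close> rank_def using \<open>finite S\<close> psubset_card_mono by auto
  qed
  ultimately have "rank ` S = {..<card S}"
    using \<open>finite S\<close> card_image by (intro card_subset_eq) auto
  then obtain r where "r \<in> S" "rank r = j"
    using \<open>j < card S\<close> by (metis imageE lessThan_iff)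
  then show ?thesis
    using \<open>inj_on rank S\<close> unfolding rank_def inj_on_def by metis
qed

definition colex_less :: "nat \<Rightarrow> nat list \<Rightarrow> nat list \<Rightarrow> bool" where
  "colex_less s a b \<longleftrightarrow> (\<exists>i<s. a ! i < b ! i \<and> (\<forall>l. i < l \<and> l < s \<longrightarrow> a ! l = b ! l))"

lemma colex_less_irrefl: "\<not> colex_less s a a"
  by (auto simp: colex_less_def)

lemma colex_less_trans:
  assumes "colex_less s a b" "colex_less s b c"
  shows "colex_less s a c"
proof -
  obtain i where i: "i < s" "a ! i < b ! i" "\<forall>l. i < l \<and> l < s \<longrightarrow> a ! l = b ! l"
    using assms(1) unfolding colex_less_def by blast
  obtain i' where i': "i' < s" "b ! i' < c ! i'" "\<forall>l. i' < l \<and> l < s \<longrightarrow> b ! l = c ! l"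
    using assms(2) unfolding colex_less_def by blast
  show ?thesis
    unfolding colex_less_def
    using i i' by (intro exI[of _ "max i i'"]) (auto simp: max_def dest: le_neq_implies_less)
qed

lemma colex_less_total:
  assumes "length a = s" "length b = s" "a \<noteq> b"
  shows "colex_less s a b \<or> colex_less s b a"
proof -
  define D where "D = {i. i < s \<and> a ! i \<noteq> b ! i}"
  define m where "m = Max D"
  have "finite D"
    unfolding D_def by simp
  moreover have "D \<noteq> {}"
  proof
    assume "D = {}"
    then have "a = b"
      using assms(1,2) by (intro nth_equalityI) (auto simp: D_def)
    then show False
      using assms(3) by simp
  qed
  ultimately have "m < s" "a ! m \<noteq> b ! m"
    using Max_in unfolding m_def D_def by blast+
  moreover have "\<forall>l. m < l \<and> l < s \<longrightarrow> a ! l = b ! l"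
    using Max_ge[OF \<open>finite D\<close>] unfolding m_def D_def by (auto simp: not_le[symmetric])
  ultimately show ?thesis
    unfolding colex_less_def by (metis linorder_neqE_nat)
qed

lemma mem_pideal_iff: "x \<in> pideal g \<longleftrightarrow> (\<exists>r. x = g * r)"
  by (auto simp: pideal_def)

lemma mult_mem_pideal: "x \<in> pideal g \<Longrightarrow> y * x \<in> pideal g"
  unfolding mem_pideal_iff by (metis mult.left_commute)

lemma nilpotent_power_eq_0_if_dvd:
  fixes g :: "'a::comm_ring_1"
  assumes "g ^ s = 0" and "g ^ Suc t dvd g ^ t"
  shows "g ^ t = 0"
proof -
  obtain w where w: "g ^ t = g ^ Suc t * w"
    using assms(2) by (rule dvdE)
  have "g ^ t = g ^ (t + m) * w ^ m" for m
  proof (induction m)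
    case (Suc m)
    have "g ^ t = g ^ (t + m) * w ^ m"
      by (fact Suc)
    also have "\<dots> = g ^ m * g ^ t * w ^ m"
      by (simp add: power_add)
    also have "\<dots> = g ^ m * (g ^ Suc t * w) * w ^ m"
      by (subst w) (rule refl)
    also have "\<dots> = g ^ (t + Suc m) * w ^ Suc m"
      by (simp add: power_add mult_ac)
    finally show ?case .
  qed simp
  from this[of s] show ?thesis
    using assms(1) by (simp add: power_add)
qed

fun radix_val :: "'a::comm_ring_1 \<Rightarrow> 'a list \<Rightarrow> nat list \<Rightarrow> 'a" where
  "radix_val g e [] = 0"
| "radix_val g e (d # ds) = e ! d + g * radix_val g e ds"

lemma radix_val_eq_sum: "radix_val g e ds = (\<Sum>i<length ds. e ! (ds ! i) * g ^ i)"
proof (induction ds)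
  case (Cons d ds)
  have "(\<Sum>i<length (d # ds). e ! ((d # ds) ! i) * g ^ i)
      = e ! d + g * (\<Sum>i<length ds. e ! (ds ! i) * g ^ i)"
    by (simp add: sum.lessThan_Suc_shift sum_distrib_left algebra_simps del: sum.lessThan_Suc)
  then show ?case
    using Cons by simp
qed simp

context
  fixes gam :: "'a::{comm_ring_1,finite}" and s q :: nat and e :: "'a list"
  assumes crd: "chain_ring_data gam s q e"
begin

lemma chain_ring_dataD:
  "(0::'a) \<noteq> 1" "pideal gam \<noteq> UNIV"
  "\<And>J. is_ideal J \<Longrightarrow> pideal gam \<subseteq> J \<Longrightarrow> J = pideal gam \<or> J = UNIV"
  "gam ^ s = 0" "\<And>t. t < s \<Longrightarrow> gam ^ t \<noteq> 0" "\<And>x. \<exists>!i. i < q \<and> x - e ! i \<in> pideal gam"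
  using crd unfolding chain_ring_data_def by blast+

lemmas gam_power_s = chain_ring_dataD(4)
  and gam_power_neq_0 = chain_ring_dataD(5)
  and ex1_coset_rep = chain_ring_dataD(6)

lemma s_pos: "0 < s"
  using chain_ring_dataD(1,4) by (cases s) simp_all

lemma one_notin_pideal: "1 \<notin> pideal gam"
proof
  assume "1 \<in> pideal gam"
  then have "pideal gam = UNIV"
    using mult_mem_pideal[of 1 gam] by (metis UNIV_eq_I mult.right_neutral)
  then show False
    using chain_ring_dataD(2) by contradiction
qed

lemma bezout_gam:
  assumes "u \<notin> pideal gam"
  shows "\<exists>a b. 1 = gam * a + u * b"
proof -
  define J where "J = {gam * a + u * b | a b. True}"
  have "is_ideal J"
    unfolding is_ideal_def J_def
  proof (intro conjI ballI allI)
    show "0 \<in> {gam * a + u * b |a b. True}"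
      by (rule CollectI, intro exI[of _ 0]) simp
  next
    fix x y assume "x \<in> {gam * a + u * b |a b. True}" "y \<in> {gam * a + u * b |a b. True}"
    then obtain a b a' b' where "x = gam * a + u * b" "y = gam * a' + u * b'"
      by blast
    then have "x + y = gam * (a + a') + u * (b + b')"
      by (simp add: algebra_simps)
    then show "x + y \<in> {gam * a + u * b |a b. True}"
      by blast
  next
    fix r x assume "x \<in> {gam * a + u * b |a b. True}"
    then obtain a b where "x = gam * a + u * b"
      by blast
    then have "r * x = gam * (r * a) + u * (r * b)"
      by (simp add: algebra_simps)
    then show "r * x \<in> {gam * a + u * b |a b. True}"
      by blast
  qed
  moreover have "pideal gam \<subseteq> J"
    unfolding J_def pideal_def by (auto, metis add.right_neutral mult_zero_right)
  moreover have "u \<in> J"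
    unfolding J_def by (rule CollectI, intro exI[of _ 0] exI[of _ 1]) simp
  ultimately have "J = UNIV"
    using assms chain_ring_dataD(3) by blast
  then show ?thesis
    unfolding J_def by blast
qed

text \<open>Distinct representatives differ by a unit modulo \<open>gam\<close>, so otherwise
  \<open>gam ^ Suc t\<close> would divide \<open>gam ^ t\<close>.\<close>

lemma coset_rep_eq_if_power_mult_diff:
  assumes "d < q" "d' < q" "t < s"
    and "gam ^ t * (e ! d - e ! d') = gam ^ Suc t * z"
  shows "d = d'"
proof (rule ccontr)
  assume "d \<noteq> d'"
  define u where "u = e ! d - e ! d'"
  have "u \<notin> pideal gam"
  proof
    assume "u \<in> pideal gam"
    moreover have "e ! d - e ! d \<in> pideal gam"
      unfolding mem_pideal_iff by (rule exI[of _ 0]) simp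
    ultimately have "d = d'"
      using ex1_coset_rep[of "e ! d"] assms(1,2) unfolding u_def by blast
    then show False
      using \<open>d \<noteq> d'\<close> by contradiction
  qed
  then obtain a b where ab: "1 = gam * a + u * b"
    using bezout_gam by blast
  have "gam ^ t = gam ^ Suc t * a + (gam ^ t * u) * b"
    by (subst (1) mult_1_right[symmetric], subst ab) (simp add: algebra_simps)
  also have "\<dots> = gam ^ Suc t * (a + z * b)"
    using assms(4) unfolding u_def by (simp add: algebra_simps)
  finally have "gam ^ t = 0"
    by (rule nilpotent_power_eq_0_if_dvd[OF gam_power_s dvdI])
  then show False
    using gam_power_neq_0 assms(3) by simp
qed

text \<open>The factor \<open>gam ^ t\<close> makes the induction go through: the expansion of
  \<open>gam ^ t * x\<close> is that of \<open>x\<close> shifted by \<open>t\<close> places.\<close>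

lemma power_mult_radix_val_inj:
  assumes "length ds = length ds'" "set ds \<subseteq> {..<q}" "set ds' \<subseteq> {..<q}"
    and "t + length ds \<le> s"
    and "gam ^ t * radix_val gam e ds = gam ^ t * radix_val gam e ds'"
  shows "ds = ds'"
  using assms
proof (induction ds arbitrary: ds' t)
  case (Cons d ds)
  then obtain d' ds'' where ds': "ds' = d' # ds''"
    by (cases ds') simp_all
  have eq: "gam ^ t * (e ! d + gam * radix_val gam e ds)
          = gam ^ t * (e ! d' + gam * radix_val gam e ds'')"
    using Cons.prems ds' by simp
  then have "gam ^ t * (e ! d - e ! d')
      = gam ^ Suc t * (radix_val gam e ds'' - radix_val gam e ds)"
    by (simp add: algebra_simps)
  then have "d = d'"
    using Cons.prems ds' by (intro coset_rep_eq_if_power_mult_diff) simp_all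
  moreover have "gam ^ Suc t * radix_val gam e ds = gam ^ Suc t * radix_val gam e ds''"
    using eq \<open>d = d'\<close> by (simp add: algebra_simps)
  then have "ds = ds''"
    using Cons.IH[of ds'' "Suc t"] Cons.prems ds' by auto
  ultimately show ?case
    using ds' by simp
qed simp

lemma ex_radix_expansion:
  "\<exists>ds r. length ds = n \<and> set ds \<subseteq> {..<q} \<and> x = radix_val gam e ds + gam ^ n * r"
proof (induction n arbitrary: x)
  case 0
  show ?case
    by (rule exI[of _ "[]"], rule exI[of _ x]) simp
next
  case (Suc n)
  obtain d where "d < q" "x - e ! d \<in> pideal gam"
    using ex1_coset_rep[of x] by blast
  then obtain y where y: "x - e ! d = gam * y"
    using mem_pideal_iff by blast
  obtain ds r where "length ds = n" "set ds \<subseteq> {..<q}" "y = radix_val gam e ds + gam ^ n * r"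
    using Suc[of y] by blast
  then show ?case
    using y \<open>d < q\<close>
    by (intro exI[of _ "d # ds"] exI[of _ r]) (auto simp: algebra_simps)
qed

lemma digits_spec_iff:
  "(length ds = s \<and> (\<forall>i<s. ds ! i < q) \<and> x = (\<Sum>i<s. e ! (ds ! i) * gam ^ i))
     \<longleftrightarrow> (length ds = s \<and> set ds \<subseteq> {..<q} \<and> x = radix_val gam e ds)"
  by (fastforce simp: radix_val_eq_sum in_set_conv_nth subset_iff)

lemma ex1_digits:
  "\<exists>!ds. length ds = s \<and> (\<forall>i<s. ds ! i < q) \<and> x = (\<Sum>i<s. e ! (ds ! i) * gam ^ i)"
  unfolding digits_spec_iff
proof -
  obtain ds r where ds: "length ds = s" "set ds \<subseteq> {..<q}" "x = radix_val gam e ds + gam ^ s * r"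
    using ex_radix_expansion by blast
  then have "x = radix_val gam e ds"
    using gam_power_s by simp
  then show "\<exists>!ds. length ds = s \<and> set ds \<subseteq> {..<q} \<and> x = radix_val gam e ds"
    using ds(1,2) power_mult_radix_val_inj[of _ ds 0] by (intro ex1I[of _ ds]) auto
qed

lemma digits_spec:
  "length (digits gam s q e x) = s" "radix_val gam e (digits gam s q e x) = x"
proof -
  have "length (digits gam s q e x) = s \<and> (\<forall>i<s. digits gam s q e x ! i < q)
      \<and> x = (\<Sum>i<s. e ! (digits gam s q e x ! i) * gam ^ i)"
    unfolding digits_def by (rule theI'[OF ex1_digits])
  then show "length (digits gam s q e x) = s" "radix_val gam e (digits gam s q e x) = x"
    unfolding digits_spec_iff by simp_all
qed

lemma cr_less_iff_colex_less:
  "cr_less gam s q e x y \<longleftrightarrow> colex_less s (digits gam s q e x) (digits gam s q e y)"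
  unfolding cr_less_def colex_less_def by simp

lemma cr_less_total: "x \<noteq> y \<Longrightarrow> cr_less gam s q e x y \<or> cr_less gam s q e y x"
  unfolding cr_less_iff_colex_less
  by (rule colex_less_total) (simp_all add: digits_spec(1), metis digits_spec(2))

lemma cr_less_irrefl: "\<not> cr_less gam s q e x x"
  unfolding cr_less_iff_colex_less by (rule colex_less_irrefl)

lemma cr_less_trans: "cr_less gam s q e x y \<Longrightarrow> cr_less gam s q e y z \<Longrightarrow> cr_less gam s q e x z"
  unfolding cr_less_iff_colex_less by (rule colex_less_trans)

lemma card_radix_vals:
  assumes "t + n \<le> s"
  shows "card ((\<lambda>ds. gam ^ t * radix_val gam e ds) ` {ds. set ds \<subseteq> {..<q} \<and> length ds = n}) = q ^ n"
proof -
  have "inj_on (\<lambda>ds. gam ^ t * radix_val gam e ds) {ds. set ds \<subseteq> {..<q} \<and> length ds = n}"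
  proof (rule inj_onI)
    fix ds ds' assume "ds \<in> {ds. set ds \<subseteq> {..<q} \<and> length ds = n}"
      "ds' \<in> {ds. set ds \<subseteq> {..<q} \<and> length ds = n}"
      "gam ^ t * radix_val gam e ds = gam ^ t * radix_val gam e ds'"
    then show "ds = ds'"
      using assms by (intro power_mult_radix_val_inj) simp_all
  qed
  then show ?thesis
    by (simp add: card_image card_lists_length_eq)
qed

lemma card_UNIV_ge: "q ^ s \<le> card (UNIV :: 'a set)"
proof -
  have "q ^ s = card ((\<lambda>ds. gam ^ 0 * radix_val gam e ds) ` {ds. set ds \<subseteq> {..<q} \<and> length ds = s})"
    by (rule card_radix_vals[symmetric]) simp
  also have "\<dots> \<le> card (UNIV :: 'a set)"
    by (rule card_mono) simp_all
  finally show ?thesis .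
qed

lemma card_pideal_ge: "q ^ (s - 1) \<le> card (pideal gam)"
proof -
  have "q ^ (s - 1)
      = card ((\<lambda>ds. gam ^ 1 * radix_val gam e ds) ` {ds. set ds \<subseteq> {..<q} \<and> length ds = s - 1})"
    using s_pos by (intro card_radix_vals[symmetric]) simp
  also have "\<dots> \<le> card (pideal gam)"
    by (rule card_mono) (auto simp: mem_pideal_iff)
  finally show ?thesis .
qed

lemma rank_rho: "j < q ^ s \<Longrightarrow> card {x. cr_less gam s q e x (rho gam s q e j)} = j"
  using ex1_of_rank[of UNIV "cr_less gam s q e" j] cr_less_irrefl cr_less_trans cr_less_total
    card_UNIV_ge
  unfolding rho_def by (auto intro: theI')

lemma rho_inj: "i < q ^ s \<Longrightarrow> j < q ^ s \<Longrightarrow> rho gam s q e i = rho gam s q e j \<Longrightarrow> i = j"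
  using rank_rho by metis

lemma agam_spec:
  assumes "j < q ^ (s - 1)"
  shows "agam gam s q e j \<in> pideal gam"
    and "card {x \<in> pideal gam. cr_less gam s q e x (agam gam s q e j)} = j"
proof -
  have "\<exists>!r. r \<in> pideal gam \<and> card {x \<in> pideal gam. cr_less gam s q e x r} = j"
    using cr_less_irrefl cr_less_trans cr_less_total card_pideal_ge assms
    by (intro ex1_of_rank) auto
  then have "agam gam s q e j \<in> pideal gam
      \<and> card {x \<in> pideal gam. cr_less gam s q e x (agam gam s q e j)} = j"
    unfolding agam_def by (rule theI')
  then show "agam gam s q e j \<in> pideal gam"
      and "card {x \<in> pideal gam. cr_less gam s q e x (agam gam s q e j)} = j"
    by simp_all
qed

lemma agam_inj:
  "i < q ^ (s - 1) \<Longrightarrow> j < q ^ (s - 1) \<Longrightarrow> agam gam s q e i = agam gam s q e j \<Longrightarrow> i = j"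
  using agam_spec(2) by metis

lemma col_alpha_inj:
  "c < q ^ (s * k) \<Longrightarrow> c' < q ^ (s * k) \<Longrightarrow> col_alpha gam s q e k c = col_alpha gam s q e k c'
   \<Longrightarrow> c = c'"
proof (induction k arbitrary: c c')
  case (Suc k)
  define p where "p = q ^ (s * k)"
  have "c < q ^ s * p" "c' < q ^ s * p"
    using Suc.prems(1,2) unfolding p_def by (simp_all add: power_add)
  then have "c div p < q ^ s" "c' div p < q ^ s" "0 < p"
    by (auto intro: gr0I less_mult_imp_div_less)
  moreover have "rho gam s q e (c div p) = rho gam s q e (c' div p)"
    "col_alpha gam s q e k (c mod p) = col_alpha gam s q e k (c' mod p)"
    using Suc.prems(3) unfolding p_def by simp_all
  ultimately have "c div p = c' div p" "c mod p = c' mod p"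
    using rho_inj Suc.IH unfolding p_def by auto
  then show ?case
    by (metis div_mult_mod_eq)
qed simp

lemma col_beta_leading_one:
  "c < n_beta q s (Suc k) \<Longrightarrow>
   \<exists>pre rest. col_beta gam s q e (Suc k) c = pre @ 1 # rest \<and> set pre \<subseteq> pideal gam"
proof (induction k arbitrary: c)
  case 0
  show ?case
    by (intro exI[of _ "[]"]) simp
next
  case (Suc k)
  show ?case
  proof (cases "c < q ^ (s * Suc k)")
    case True
    then show ?thesis
      by (intro exI[of _ "[]"] exI[of _ "col_alpha gam s q e (Suc k) c"]) simp
  next
    case False
    define c' where "c' = c - q ^ (s * Suc k)"
    define n where "n = n_beta q s (Suc k)"
    have "c' < q ^ (s - 1) * n"
      using Suc.prems False unfolding c'_def n_def by simp
    then have "agam gam s q e (c' div n) \<in> pideal gam" "0 < n"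
      using agam_spec(1) less_mult_imp_div_less by (auto intro: gr0I)
    then obtain pre rest where "col_beta gam s q e (Suc k) (c' mod n) = pre @ 1 # rest"
        "set pre \<subseteq> pideal gam"
      using Suc.IH[of "c' mod n"] unfolding n_def by auto
    moreover have "col_beta gam s q e (Suc (Suc k)) c
        = agam gam s q e (c' div n) # col_beta gam s q e (Suc k) (c' mod n)"
      using False unfolding c'_def n_def by (simp add: Let_def)
    ultimately have "col_beta gam s q e (Suc (Suc k)) c = (agam gam s q e (c' div n) # pre) @ 1 # rest"
      by simp
    moreover have "set (agam gam s q e (c' div n) # pre) \<subseteq> pideal gam"
      using \<open>agam gam s q e (c' div n) \<in> pideal gam\<close> \<open>set pre \<subseteq> pideal gam\<close> by simp
    ultimately show ?thesis
      by blast
  qed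
qed

lemma col_beta_inj:
  "c < n_beta q s (Suc k) \<Longrightarrow> c' < n_beta q s (Suc k) \<Longrightarrow>
   col_beta gam s q e (Suc k) c = col_beta gam s q e (Suc k) c' \<Longrightarrow> c = c'"
proof (induction k arbitrary: c c')
  case (Suc k)
  define P where "P = q ^ (s * Suc k)"
  define n where "n = n_beta q s (Suc k)"
  have agam_mem: "agam gam s q e ((x - P) div n) \<in> pideal gam"
    if "x < n_beta q s (Suc (Suc k))" "\<not> x < P" for x
    using that agam_spec(1) less_mult_imp_div_less unfolding P_def n_def by force
  consider "c < P" "c' < P" | "c < P" "\<not> c' < P" | "\<not> c < P" "c' < P" | "\<not> c < P" "\<not> c' < P"
    by blast
  then show ?case
  proof cases
    case 1
    then show ?thesis
      using Suc.prems(3) by (intro col_alpha_inj[of c "Suc k" c']) (simp_all add: P_def)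
  next
    case 2
    then show ?thesis
      using Suc.prems agam_mem[of c'] one_notin_pideal unfolding P_def n_def by (simp add: Let_def)
  next
    case 3
    then show ?thesis
      using Suc.prems agam_mem[of c] one_notin_pideal unfolding P_def n_def by (simp add: Let_def)
  next
    case 4
    then have lt: "c - P < q ^ (s - 1) * n" "c' - P < q ^ (s - 1) * n"
      using Suc.prems(1,2) unfolding P_def n_def by simp_all
    then have "0 < n"
      by (auto intro: gr0I)
    have "agam gam s q e ((c - P) div n) = agam gam s q e ((c' - P) div n)"
      "col_beta gam s q e (Suc k) ((c - P) mod n) = col_beta gam s q e (Suc k) ((c' - P) mod n)"
      using 4 Suc.prems(3) unfolding P_def n_def by (simp_all add: Let_def)
    then have "(c - P) div n = (c' - P) div n" "(c - P) mod n = (c' - P) mod n"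
      using agam_inj less_mult_imp_div_less[OF lt(1)] less_mult_imp_div_less[OF lt(2)]
        Suc.IH \<open>0 < n\<close> unfolding n_def by auto
    then have "c - P = c' - P"
      by (metis div_mult_mod_eq)
    then show ?thesis
      using 4 by simp
  qed
qed simp

end

lemma scalar_eq_1_if_leading_ones:
  fixes lam :: "'a::comm_ring_1"
  assumes "1 \<notin> pideal g"
    and "set pre \<subseteq> pideal g" "set pre' \<subseteq> pideal g"
    and eq: "pre @ 1 # rest = map (\<lambda>x. lam * x) (pre' @ 1 # rest')"
  shows "lam = 1"
proof (cases "length pre" "length pre'" rule: linorder_cases)
  case less
  then have "1 = lam * pre' ! length pre"
    using arg_cong[OF eq, of "\<lambda>xs. xs ! length pre"] by (simp add: nth_append)
  then have "1 \<in> pideal g"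
    using less assms(3) mult_mem_pideal by (metis nth_mem subsetD)
  then show ?thesis
    using assms(1) by blast
next
  case equal
  then show ?thesis
    using arg_cong[OF eq, of "\<lambda>xs. xs ! length pre"] by (simp add: nth_append)
next
  case greater
  have len: "length pre < length (pre' @ 1 # rest')"
    using arg_cong[OF eq, of length] by simp
  from greater have "pre ! length pre' = lam"
    using arg_cong[OF eq, of "\<lambda>xs. xs ! length pre'"] by (simp add: nth_append)
  then have "lam \<in> pideal g"
    using greater assms(2) nth_mem by blast
  moreover have "1 = lam * (pre' @ 1 # rest') ! length pre"
    using nth_map[OF len, of "\<lambda>x. lam * x", folded eq] by simp
  ultimately have "1 \<in> pideal g"
    using mult_mem_pideal[of lam g] by (metis mult.commute)
  then show ?thesis
    using assms(1) by blast
qed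

theorem proposition2p8:
  fixes gam lam :: "'a::{comm_ring_1,finite}" and s q k i j :: nat and e :: "'a list"
  assumes "chain_ring_data gam s q e"
    and "k \<ge> 1"
    and "i < n_beta q s k" and "j < n_beta q s k"
    and "col_beta gam s q e k i = map (\<lambda>x. lam * x) (col_beta gam s q e k j)"
  shows "lam = 1 \<and> i = j"
proof -
  obtain k' where k: "k = Suc k'"
    using assms(2) by (cases k) auto
  obtain pre rest pre' rest' where cols:
      "col_beta gam s q e k i = pre @ 1 # rest" "set pre \<subseteq> pideal gam"
      "col_beta gam s q e k j = pre' @ 1 # rest'" "set pre' \<subseteq> pideal gam"
    using col_beta_leading_one[OF assms(1)] assms(3,4) k by meson
  have "pre @ 1 # rest = map (\<lambda>x. lam * x) (pre' @ 1 # rest')"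
    using assms(5) cols(1,3) by simp
  then have "lam = 1"
    by (rule scalar_eq_1_if_leading_ones[OF one_notin_pideal[OF assms(1)] cols(2,4)])
  moreover have "i = j"
    using col_beta_inj[OF assms(1)] assms(3-5) \<open>lam = 1\<close> k by simp
  ultimately show ?thesis
    by simp
qed

end
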